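(* Let $\eta:[0,1]\times[0,1]\to\mathbf R$ be a function such that $\eta(\cdot,s)$ is continuous for every $s\in[0,1]$ and, for every $\varepsilon>0$, $\eta(\cdot,s)$ is Lipschitz on $[\varepsilon,1]$ uniformly in $s\in[0,1]$. Assume also that $\eta(t,\cdot)$ is non-decreasing for every $t\in[0,1]$. Define $$r(t):=\liminf_{h\to0^+}\frac{\eta(t,t)-\eta(t-h,t)}{h}+\liminf_{h\to0^+}\frac{\eta(t,t+h)-\eta(t,t)}{h}$$ and $\delta(t):=\eta(t,t)$. Then $\delta\in L^1(0,1)$ and $D\delta\ge r(t)\,dt$ in the sense of distributions on $(0,1)$. Moreover, $$\delta(1)-\delta(0)\ge\int_0^1r(\xi)\,d\xi.$$
   Context: $D\delta$ denotes the distributional derivative of $\delta$ on $(0,1)$; $D\delta\ge r\,dt$ means $-\int_0^1\delta\,\phi'\,dt\ge\int_0^1 r\,\phi\,dt$ for all non-negative $\phi\in C^\infty_c(0,1)$. *)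

theory Defs
  imports "HOL-Analysis.Analysis"
begin

definition test_fun01 :: "(real \<Rightarrow> real) \<Rightarrow> bool" where
  "test_fun01 \<phi> \<longleftrightarrow>
     (\<forall>k::nat. \<forall>x. ((deriv ^^ k) \<phi> has_real_derivative (deriv ^^ (Suc k)) \<phi> x) (at x)) \<and>
     (\<exists>a b. 0 < a \<and> a \<le> b \<and> b < 1 \<and> (\<forall>x. x \<notin> {a..b} \<longrightarrow> \<phi> x = 0))"

definition pos_int :: "real set \<Rightarrow> (real \<Rightarrow> ereal) \<Rightarrow> ennreal" where
  "pos_int S f = (\<integral>\<^sup>+ x\<in>S. e2ennreal (f x) \<partial>lebesgue)"

definition neg_int :: "real set \<Rightarrow> (real \<Rightarrow> ereal) \<Rightarrow> ennreal" where
  "neg_int S f = (\<integral>\<^sup>+ x\<in>S. e2ennreal (- f x) \<partial>lebesgue)"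

text \<open>"\<integral>_S f \<le> c" for the extended Lebesgue integral int f_pos - int f_neg, written without
  subtraction: int f_pos <= c + int f_neg. (Vacuous only when the integral is undefined, \<infinity> - \<infinity>.)\<close>
definition ext_integral_le :: "real set \<Rightarrow> (real \<Rightarrow> ereal) \<Rightarrow> real \<Rightarrow> bool" where
  "ext_integral_le S f c \<longleftrightarrow> enn2ereal (pos_int S f) \<le> ereal c + enn2ereal (neg_int S f)"

end

theory Submission
  imports Defs
begin

text \<open>
  For \<open>h > 0\<close> the diagonal quotient \<open>(\<eta> t (t + h) - \<eta> (t - h) t) / h\<close> splits into a
  left quotient in the first variable and a right quotient in the second.  The Lipschitz
  bound and the monotonicity bound them below by \<open>-L\<close> and \<open>0\<close>, so Fatou's lemma gives
  \<open>\<integral> (r + L) w \<le> lim inf \<integral> (quotients + L) w\<close> for every bounded weight \<open>w \<ge> 0\<close> supported in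
  a compact subinterval of \<open>(0, 1)\<close>.  Substituting \<open>v = u + h\<close> in \<open>\<integral> \<eta> u (u + h) w u du\<close>
  turns the right-hand side into \<open>lim inf (1/h) \<integral> \<eta> (v - h) v (w (v - h) - w v) dv + L \<integral> w\<close>,
  a discrete form of \<open>- \<integral> \<delta> w' + L \<integral> w\<close>.  For a test function Taylor's formula identifies
  the limit as \<open>- \<integral> \<delta> \<phi>'\<close>; for the indicator of \<open>(a, 1 - a]\<close> it is at most
  \<open>\<delta> 1 - \<delta> 0\<close> up to errors that vanish as \<open>a \<rightarrow> 0\<close>, and monotone convergence gives
  \<open>\<integral> r \<le> \<delta> 1 - \<delta> 0\<close>.  The quotients are upper semicontinuous from the left in \<open>h\<close>, so the
  lower limits defining \<open>r\<close> may be taken over rational \<open>h\<close>, which makes \<open>r\<close> measurable.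
\<close>

lemma borel_measurable_lebesgueI:
  fixes f :: "'a::euclidean_space \<Rightarrow> 'b::topological_space"
  shows "f \<in> borel_measurable borel \<Longrightarrow> f \<in> borel_measurable lebesgue"
  by (intro measurable_completion) (simp add: measurable_lborel1)

lemma borel_measurable_mono_up_to_linear:
  fixes g :: "real \<Rightarrow> real"
  assumes S: "S \<in> sets borel"
    and g: "\<And>x y. x \<in> S \<Longrightarrow> y \<in> S \<Longrightarrow> x \<le> y \<Longrightarrow> g x \<le> g y + L * (y - x)"
  shows "(\<lambda>x. if x \<in> S then g x else 0) \<in> borel_measurable borel"
proof -
  have "mono_on S (\<lambda>x. g x + L * x)"
    by (rule mono_onI) (use g in \<open>fastforce simp: algebra_simps\<close>)
  then have "(\<lambda>x. g x + L * x) \<in> borel_measurable (restrict_space borel S)"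
    by (rule borel_measurable_mono_on_fnc)
  moreover have "(\<lambda>x. L * x) \<in> borel_measurable (restrict_space borel S)"
    by (intro measurable_restrict_space1) simp
  ultimately have "(\<lambda>x. (g x + L * x) - L * x) \<in> borel_measurable (restrict_space borel S)"
    by (rule borel_measurable_diff)
  then show ?thesis
    using measurable_restrict_space_iff[of S borel 0 borel g] S by simp
qed

lemma integrable_bounded_support:
  fixes f :: "real \<Rightarrow> real"
  assumes "f \<in> borel_measurable lebesgue"
    and "\<And>x. x \<in> {a..b} \<Longrightarrow> \<bar>f x\<bar> \<le> B" and "\<And>x. x \<notin> {a..b} \<Longrightarrow> f x = 0"
  shows "integrable lebesgue f"
  using assms by (intro integrableI_bounded_set[where A="{a..b}" and B=B]) (auto simp: emeasure_lborel_Icc_eq)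

lemma mult_le_if_less_divide:
  fixes C h e :: real
  assumes "0 \<le> h" "h < e / (\<bar>C\<bar> + 1)"
  shows "C * h \<le> e"
proof -
  have "C * h \<le> (\<bar>C\<bar> + 1) * h"
    using assms(1) by (intro mult_right_mono) auto
  also have "\<dots> < e"
    using assms(2) by (simp add: pos_less_divide_eq mult.commute)
  finally show ?thesis by simp
qed

lemma borel_measurable_on_01_from_subintervals:
  fixes f :: "real \<Rightarrow> 'b::topological_space"
  assumes f: "\<And>a b. 0 < a \<Longrightarrow> a < b \<Longrightarrow> b < 1 \<Longrightarrow>
      f \<in> borel_measurable (restrict_space lebesgue {a<..<b})"
  shows "f \<in> borel_measurable (restrict_space lebesgue {0<..<1})"
proof (rule measurable_piecewise_restrict[of "range (\<lambda>k::nat. {1/(real k+3)<..<1-1/(real k+3)})"])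
  fix \<Omega> assume "\<Omega> \<in> range (\<lambda>k::nat. {1/(real k+3)<..<1-1/(real k+3)})"
  then obtain k :: nat where k: "\<Omega> = {1/(real k+3)<..<1-1/(real k+3)}" by blast
  have ends: "0 < 1/(real k+3)" "1/(real k+3) < 1-1/(real k+3)" "1-1/(real k+3) < 1"
    by (auto simp: field_simps)
  have sub: "\<Omega> \<subseteq> {0<..<1}"
    by (auto simp: k) (use ends in linarith)+
  then show "\<Omega> \<inter> space (restrict_space lebesgue {0<..<1}) \<in> sets (restrict_space lebesgue {0<..<1})"
    by (subst sets_restrict_space_iff) (auto simp: k)
  have "restrict_space (restrict_space lebesgue {0<..<1}) \<Omega> = restrict_space lebesgue \<Omega>"
    using sub by (subst restrict_restrict_space) (auto simp: k Int_absorb1)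
  then show "f \<in> borel_measurable (restrict_space (restrict_space lebesgue {0<..<1}) \<Omega>)"
    using f[OF ends] by (simp add: k)
next
  show "space (restrict_space lebesgue {0<..<1}) \<subseteq> \<Union> (range (\<lambda>k::nat. {1/(real k+3)<..<1-1/(real k+3)}))"
  proof
    fix t :: real assume "t \<in> space (restrict_space lebesgue {0<..<1})"
    then have t: "0 < t" "t < 1" by auto
    obtain n :: nat where n: "n > 0" "inverse (real n) < min t (1-t)"
      using ex_inverse_of_nat_less[of "min t (1-t)"] t by auto
    have "1/(real n + 3) \<le> inverse (real n)" using n by (simp add: field_simps)
    then have "t \<in> {1/(real n+3)<..<1-1/(real n+3)}" using n by auto
    then show "t \<in> \<Union> (range (\<lambda>k::nat. {1/(real k+3)<..<1-1/(real k+3)}))" by blast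
  qed
qed simp

section \<open>Lower limits at \<open>0+\<close>\<close>

lemma INF_Rats_eq_INF_if_left_usc:
  fixes f :: "real \<Rightarrow> real"
  assumes e: "0 < e" "e \<le> c"
    and usc: "\<And>h d. 0 < h \<Longrightarrow> h < c \<Longrightarrow> 0 < d \<Longrightarrow> \<forall>\<^sub>F q in at_left h. f q < f h + d"
  shows "(INF q\<in>\<rat>\<inter>{0<..<e}. ereal (f q)) = (INF q\<in>{0<..<e}. ereal (f q))"
proof (rule antisym)
  show "(INF q\<in>{0<..<e}. ereal (f q)) \<le> (INF q\<in>\<rat>\<inter>{0<..<e}. ereal (f q))"
    by (rule INF_superset_mono) auto
  show "(INF q\<in>\<rat>\<inter>{0<..<e}. ereal (f q)) \<le> (INF q\<in>{0<..<e}. ereal (f q))"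
  proof (rule INF_greatest)
    fix h assume h: "h \<in> {0<..<e}"
    show "(INF q\<in>\<rat>\<inter>{0<..<e}. ereal (f q)) \<le> ereal (f h)"
    proof (rule ereal_le_epsilon2)
      fix d :: real assume d: "0 < d"
      have "\<forall>\<^sub>F q in at_left h. f q < f h + d \<and> q \<in> {0<..<h}"
        using usc[of h d] h e d eventually_at_left_real[of 0 h] by (auto intro: eventually_conj)
      then obtain b where b: "b < h" "\<And>y. b < y \<Longrightarrow> y < h \<Longrightarrow> f y < f h + d \<and> y \<in> {0<..<h}"
        unfolding eventually_at_left_field by blast
      obtain q where q: "q \<in> \<rat>" "b < q" "q < h"
        using Rats_dense_in_real[OF b(1)] by blast
      then have "(INF q\<in>\<rat>\<inter>{0<..<e}. ereal (f q)) \<le> ereal (f q)"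
        using b(2)[OF q(2,3)] h by (intro INF_lower) auto
      also have "\<dots> \<le> ereal (f h) + ereal d"
        using b(2)[OF q(2,3)] by simp
      finally show "(INF q\<in>\<rat>\<inter>{0<..<e}. ereal (f q)) \<le> ereal (f h) + ereal d" .
    qed
  qed
qed

lemma Liminf_at_right_0_eq_SUP_INF:
  fixes f :: "real \<Rightarrow> ereal"
  shows "Liminf (at_right 0) f = (SUP n\<in>{N..}. INF q\<in>{0<..<1/(real n+1)}. f q)"
proof -
  have "{0<..} \<inter> ball 0 e - {0} = {0<..<e}" for e :: real
    by (auto simp: dist_real_def)
  then have "Liminf (at_right 0) f = (SUP e\<in>{0<..}. INF y\<in>{0<..<e}. f y)"
    unfolding Liminf_within by simp
  also have "\<dots> = (SUP n\<in>{N..}. INF q\<in>{0<..<1/(real n+1)}. f q)"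
  proof (rule antisym)
    show "(SUP e\<in>{0<..}. INF y\<in>{0<..<e}. f y) \<le> (SUP n\<in>{N..}. INF q\<in>{0<..<1/(real n+1)}. f q)"
    proof (rule SUP_least)
      fix e :: real assume "e \<in> {0<..}"
      then have e: "0 < e" by simp
      obtain n :: nat where n: "1 / e < real n" using reals_Archimedean2 by blast
      define m where "m = max n N"
      have "1/e < real m + 1" using n by (simp add: m_def)
      then have "1/(real m + 1) < e" using e by (simp add: field_simps)
      then have "(INF y\<in>{0<..<e}. f y) \<le> (INF q\<in>{0<..<1/(real m+1)}. f q)"
        by (intro INF_superset_mono) auto
      also have "\<dots> \<le> (SUP n\<in>{N..}. INF q\<in>{0<..<1/(real n+1)}. f q)"
        by (rule SUP_upper) (simp add: m_def)
      finally show "(INF y\<in>{0<..<e}. f y) \<le> (SUP n\<in>{N..}. INF q\<in>{0<..<1/(real n+1)}. f q)" .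
    qed
    show "(SUP n\<in>{N..}. INF q\<in>{0<..<1/(real n+1)}. f q) \<le> (SUP e\<in>{0<..}. INF y\<in>{0<..<e}. f y)"
      by (rule SUP_least, rule SUP_upper) auto
  qed
  finally show ?thesis .
qed

text \<open>Left upper semicontinuity in \<open>h\<close> lets the infima defining the \<open>Liminf\<close> run over
  rationals only, so the \<open>Liminf\<close> is a countable \<open>SUP\<close> of countable \<open>INF\<close>s.\<close>
lemma borel_measurable_Liminf_at_right_0:
  fixes X :: "'a \<Rightarrow> real \<Rightarrow> real"
  assumes c: "0 < c"
    and meas: "\<And>h. 0 < h \<Longrightarrow> h < c \<Longrightarrow> (\<lambda>t. X t h) \<in> borel_measurable M"
    and usc: "\<And>t h d. t \<in> space M \<Longrightarrow> 0 < h \<Longrightarrow> h < c \<Longrightarrow> 0 < d \<Longrightarrow>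
      \<forall>\<^sub>F q in at_left h. X t q < X t h + d"
  shows "(\<lambda>t. Liminf (at_right 0) (\<lambda>h. ereal (X t h))) \<in> borel_measurable M"
proof -
  obtain N :: nat where N0: "inverse (real (Suc N)) < c"
    using reals_Archimedean[OF c] by blast
  have N: "1/(real n + 1) < c" if "N \<le> n" for n
  proof -
    have "1/(real n + 1) \<le> 1/(real N + 1)" using that by (simp add: frac_le)
    with N0 show ?thesis by (simp add: inverse_eq_divide add.commute)
  qed
  let ?R = "\<lambda>t. SUP n\<in>{N..}. INF q\<in>\<rat>\<inter>{0<..<1/(real n+1)}. ereal (X t q)"
  have eq: "Liminf (at_right 0) (\<lambda>h. ereal (X t h)) = ?R t" if t: "t \<in> space M" for t
    unfolding Liminf_at_right_0_eq_SUP_INF[of _ N]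
  proof (rule SUP_cong[OF refl])
    fix n :: nat assume "n \<in> {N..}"
    then show "(INF q\<in>{0<..<1/(real n+1)}. ereal (X t q)) = (INF q\<in>\<rat>\<inter>{0<..<1/(real n+1)}. ereal (X t q))"
      using N[of n] usc[OF t] by (intro INF_Rats_eq_INF_if_left_usc[symmetric, of _ c]) auto
  qed
  have "?R \<in> borel_measurable M"
  proof (intro borel_measurable_SUP borel_measurable_INF)
    fix n q assume "n \<in> {N..}" "q \<in> \<rat> \<inter> {0<..<1/(real n+1)}"
    then show "(\<lambda>t. ereal (X t q)) \<in> borel_measurable M"
      using N[of n] by (intro borel_measurable_ereal meas) auto
  qed (auto intro: countable_Int1 countable_rat)
  moreover have "(\<lambda>t. Liminf (at_right 0) (\<lambda>h. ereal (X t h))) \<in> borel_measurable M \<longleftrightarrow> ?R \<in> borel_measurable M"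
    by (rule measurable_cong) (rule eq)
  ultimately show ?thesis by simp
qed

lemma at_right_0_sequenceE:
  fixes c :: real
  assumes c: "0 < c"
  obtains hs where "filterlim hs (at_right 0) sequentially" "\<And>n. 0 < hs n" "\<And>n. hs n \<le> c" "decseq hs"
proof
  let ?hs = "\<lambda>n. c / (1 + real n)"
  have "?hs \<longlonglongrightarrow> 0"
    by (intro tendsto_divide_0[OF tendsto_const] filterlim_at_top_imp_at_infinity
        filterlim_tendsto_add_at_top[OF tendsto_const filterlim_real_sequentially])
  then show "filterlim ?hs (at_right 0) sequentially"
    using c by (intro tendsto_imp_filterlim_at_right) auto
  show "0 < ?hs n" "?hs n \<le> c" for n
    using c by (auto simp: divide_le_eq)
  show "decseq ?hs"
    using c by (intro decseq_SucI) (simp add: frac_le)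
qed

lemma Liminf_le_liminf_comp:
  fixes f :: "'a \<Rightarrow> 'b::complete_linorder"
  assumes "filterlim g F sequentially"
  shows "Liminf F f \<le> liminf (\<lambda>n. f (g n))"
proof (subst le_Liminf_iff, intro allI impI)
  fix y assume "y < Liminf F f"
  then have "\<forall>\<^sub>F x in F. y < f x"
    using le_Liminf_iff[of "Liminf F f" F f] by auto
  then show "\<forall>\<^sub>F n in sequentially. y < f (g n)"
    using assms by (rule eventually_compose_filterlim)
qed

lemma e2ennreal_mult_le_liminf:
  fixes S :: ereal and s :: "nat \<Rightarrow> real"
  assumes S: "S \<le> liminf (\<lambda>n. ereal (s n))" and w: "0 \<le> w"
  shows "e2ennreal (S * ereal w) \<le> liminf (\<lambda>n. ennreal (s n * w))"
proof -
  have "e2ennreal (S * ereal w) \<le> e2ennreal (liminf (\<lambda>n. ereal (s n)) * ereal w)"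
    using S w by (intro e2ennreal_mono ereal_mult_right_mono) auto
  also have "\<dots> = e2ennreal (liminf (\<lambda>n. ereal (s n) * ereal w))"
    using w by (subst Liminf_ereal_mult_right) auto
  also have "\<dots> = liminf (\<lambda>n. e2ennreal (ereal (s n) * ereal w))"
    by (rule Liminf_compose_continuous_mono[symmetric])
      (auto simp: continuous_on_e2ennreal mono_def e2ennreal_mono)
  finally show ?thesis by simp
qed

lemma e2ennreal_Liminf_add_mult_le_liminf:
  fixes X Y :: "real \<Rightarrow> real"
  assumes hs: "filterlim hs (at_right 0) sequentially"
    and X: "\<forall>\<^sub>F h in at_right 0. - c \<le> X h" and Y: "\<forall>\<^sub>F h in at_right 0. 0 \<le> Y h"
    and w: "0 \<le> w"
  shows "e2ennreal ((Liminf (at_right 0) (\<lambda>h. ereal (X h)) + Liminf (at_right 0) (\<lambda>h. ereal (Y h))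
      + ereal c) * ereal w) \<le> liminf (\<lambda>n. ennreal ((X (hs n) + Y (hs n) + c) * w))"
proof (rule e2ennreal_mult_le_liminf[OF _ w])
  have eq: "Liminf (at_right 0) (\<lambda>h. ereal (X h) + ereal c) = Liminf (at_right 0) (\<lambda>h. ereal (X h)) + ereal c"
    by (rule Liminf_add_ereal_right) auto
  have "Liminf (at_right 0) (\<lambda>h. ereal (X h)) + Liminf (at_right 0) (\<lambda>h. ereal (Y h)) + ereal c
      = Liminf (at_right 0) (\<lambda>h. ereal (X h) + ereal c) + Liminf (at_right 0) (\<lambda>h. ereal (Y h))"
    unfolding eq by (simp only: ac_simps)
  also have "\<dots> \<le> Liminf (at_right 0) (\<lambda>h. ereal (X h) + ereal c + ereal (Y h))"
    using X Y by (intro Liminf_add_le) (auto elim: eventually_mono)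
  also have "\<dots> \<le> liminf (\<lambda>n. ereal (X (hs n)) + ereal c + ereal (Y (hs n)))"
    using hs by (rule Liminf_le_liminf_comp)
  finally show "Liminf (at_right 0) (\<lambda>h. ereal (X h)) + Liminf (at_right 0) (\<lambda>h. ereal (Y h)) + ereal c
      \<le> liminf (\<lambda>n. ereal (X (hs n) + Y (hs n) + c))"
    by (simp add: ac_simps)
qed

lemma nn_integral_le_of_liminf_integrals:
  fixes f :: "nat \<Rightarrow> 'a \<Rightarrow> real" and g :: "'a \<Rightarrow> ennreal"
  assumes f: "\<And>n. integrable M (f n)" "\<And>n x. 0 \<le> f n x"
    and g: "\<And>x. g x \<le> liminf (\<lambda>n. ennreal (f n x))"
    and bound: "\<And>e. 0 < e \<Longrightarrow> \<forall>\<^sub>F n in sequentially. integral\<^sup>L M (f n) \<le> K + e"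
  shows "enn2ereal (\<integral>\<^sup>+x. g x \<partial>M) \<le> ereal K"
proof (rule ereal_le_epsilon2)
  fix e :: real assume e: "0 < e"
  have "(\<integral>\<^sup>+x. g x \<partial>M) \<le> (\<integral>\<^sup>+x. liminf (\<lambda>n. ennreal (f n x)) \<partial>M)"
    using g by (intro nn_integral_mono)
  also have "\<dots> \<le> liminf (\<lambda>n. \<integral>\<^sup>+x. ennreal (f n x) \<partial>M)"
    using f(1) by (intro nn_integral_liminf) auto
  also have "\<dots> = liminf (\<lambda>n. ennreal (integral\<^sup>L M (f n)))"
    using f by (simp add: nn_integral_eq_integral)
  also have "\<dots> \<le> ennreal (K + e)"
    using bound[OF e] by (intro Liminf_le) (auto elim: eventually_mono intro: ennreal_leI)
  finally have "enn2ereal (\<integral>\<^sup>+x. g x \<partial>M) \<le> enn2ereal (ennreal (K + e))"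
    by (simp add: less_eq_ennreal.rep_eq)
  moreover have "0 \<le> K + e"
  proof -
    obtain n where "integral\<^sup>L M (f n) \<le> K + e"
      using eventually_happens'[OF _ bound[OF e]] by auto
    moreover have "0 \<le> integral\<^sup>L M (f n)"
      using f(2) by (rule integral_nonneg_AE[OF AE_I2])
    ultimately show ?thesis by linarith
  qed
  ultimately show "enn2ereal (\<integral>\<^sup>+x. g x \<partial>M) \<le> ereal K + ereal e"
    by simp
qed

section \<open>Extended integral inequalities\<close>

lemma pos_int_eq_nn_integral_restrict:
  "S \<in> sets lebesgue \<Longrightarrow> pos_int S f = (\<integral>\<^sup>+x. e2ennreal (f x) \<partial>restrict_space lebesgue S)"
  unfolding pos_int_def by (simp add: nn_integral_restrict_space)

lemma neg_int_eq_nn_integral_restrict: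
  "S \<in> sets lebesgue \<Longrightarrow> neg_int S f = (\<integral>\<^sup>+x. e2ennreal (- f x) \<partial>restrict_space lebesgue S)"
  unfolding neg_int_def by (simp add: nn_integral_restrict_space)

lemma ext_integral_le_mono:
  "ext_integral_le S f c \<Longrightarrow> c \<le> c' \<Longrightarrow> ext_integral_le S f c'"
  unfolding ext_integral_le_def by (erule order.trans) (simp add: add_right_mono)

lemma e2ennreal_mult_add_eq:
  fixes x :: ereal and w L :: real
  assumes w: "0 \<le> w" and L: "0 \<le> L" and x: "0 < w \<Longrightarrow> - ereal L \<le> x"
  shows "e2ennreal (x * ereal w) + ennreal (L * w)
       = e2ennreal ((x + ereal L) * ereal w) + e2ennreal (- (x * ereal w))"
proof (cases "w = 0")
  case True
  then show ?thesis by (simp add: zero_ereal_def[symmetric] e2ennreal_neg)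
next
  case False
  with w x have w: "0 < w" and x: "- ereal L \<le> x" by auto
  show ?thesis
  proof (cases x)
    case (real y)
    show ?thesis
    proof (cases "0 \<le> y")
      case True
      then show ?thesis using real w L
        by (simp add: e2ennreal_neg ennreal_neg ennreal_plus[symmetric] distrib_right del: ennreal_plus)
    next
      case False
      have "0 \<le> (y + L) * w" "0 \<le> - (y * w)"
        using x w False real by (auto simp: mult_nonpos_nonneg)
      then have "ennreal (L * w) = ennreal ((y + L) * w) + ennreal (- (y * w))"
        by (simp add: ennreal_plus[symmetric] algebra_simps del: ennreal_plus)
      then show ?thesis using real w False
        by (simp add: ennreal_neg mult_nonpos_nonneg)
    qed
  qed (use w x in auto)
qed

text \<open>Adding \<open>L w\<close> makes the integrand non-negative; the finite term \<open>L \<integral> w\<close> then cancels.\<close>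
lemma ext_integral_le_weighted:
  fixes f :: "real \<Rightarrow> ereal" and w :: "real \<Rightarrow> real"
  assumes S: "S \<in> sets lebesgue" and f: "f \<in> borel_measurable (restrict_space lebesgue S)"
    and w: "integrable lebesgue w" "\<And>u. 0 \<le> w u" "\<And>u. u \<notin> S \<Longrightarrow> w u = 0"
    and L: "0 \<le> L" and f_ge: "\<And>u. u \<in> S \<Longrightarrow> 0 < w u \<Longrightarrow> - ereal L \<le> f u"
    and le: "enn2ereal (\<integral>\<^sup>+u. e2ennreal ((f u + ereal L) * ereal (w u)) \<partial>lebesgue)
      \<le> ereal (K + L * integral\<^sup>L lebesgue w)"
  shows "ext_integral_le S (\<lambda>u. f u * ereal (w u)) K"
proof -
  let ?M = "restrict_space lebesgue S"
  let ?fw = "\<lambda>u. f u * ereal (w u)"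
  let ?P = "\<integral>\<^sup>+u. e2ennreal (?fw u) \<partial>?M" and ?N = "\<integral>\<^sup>+u. e2ennreal (- ?fw u) \<partial>?M"
  let ?Q = "\<integral>\<^sup>+u. e2ennreal ((f u + ereal L) * ereal (w u)) \<partial>lebesgue"
  define c where "c = L * integral\<^sup>L lebesgue w"
  have c: "0 \<le> c"
    unfolding c_def using L w(2) by (simp add: integral_nonneg_AE)
  have off_S: "(\<integral>\<^sup>+u. g u \<partial>?M) = (\<integral>\<^sup>+u. g u \<partial>lebesgue)" if "\<And>u. u \<notin> S \<Longrightarrow> g u = 0" for g
    using S that by (simp add: nn_integral_restrict_space) (auto intro!: nn_integral_cong simp: indicator_def)
  have mw: "w \<in> borel_measurable ?M"
    using w(1) by (intro measurable_restrict_space1) auto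
  have mfw: "?fw \<in> borel_measurable ?M"
    using f borel_measurable_ereal[OF mw] by (rule borel_measurable_ereal_times)
  have mfLw: "(\<lambda>u. (f u + ereal L) * ereal (w u)) \<in> borel_measurable ?M"
    using f mw by measurable
  have Q_off_S: "(\<integral>\<^sup>+u. e2ennreal ((f u + ereal L) * ereal (w u)) \<partial>?M) = ?Q"
    by (rule off_S) (simp add: w(3) e2ennreal_neg flip: zero_ereal_def)
  have "?P + ennreal c = (\<integral>\<^sup>+u. e2ennreal (?fw u) + ennreal (L * w u) \<partial>?M)"
    using mfw mw w L off_S[of "\<lambda>u. ennreal (L * w u)"] unfolding c_def
    by (subst nn_integral_add) (auto simp: nn_integral_eq_integral measurable_e2ennreal)
  also have "\<dots> = (\<integral>\<^sup>+u. e2ennreal ((f u + ereal L) * ereal (w u)) + e2ennreal (- ?fw u) \<partial>?M)"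
    using w(2) L f_ge w(3) by (intro nn_integral_cong e2ennreal_mult_add_eq) (auto simp: less_le)
  also have "\<dots> = ?Q + ?N"
    using mfw mfLw by (subst nn_integral_add) (auto simp: measurable_e2ennreal Q_off_S)
  finally have "enn2ereal (?P + ennreal c) = enn2ereal (?Q + ?N)"
    by (rule arg_cong)
  then have "enn2ereal ?P + ereal c = enn2ereal ?Q + enn2ereal ?N"
    using c by (simp add: plus_ennreal.rep_eq)
  also have "\<dots> \<le> ereal (K + c) + enn2ereal ?N"
    using le unfolding c_def by (rule add_right_mono)
  also have "\<dots> = (ereal K + enn2ereal ?N) + ereal c"
    by (simp only: plus_ereal.simps(1)[symmetric] ac_simps)
  finally show ?thesis
    unfolding ext_integral_le_def pos_int_eq_nn_integral_restrict[OF S] neg_int_eq_nn_integral_restrict[OF S]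
    by (simp add: ereal_add_le_add_iff2)
qed

lemma e2ennreal_mult_indicator:
  "e2ennreal (x * ereal (indicator A t)) = e2ennreal x * indicator A t"
  "e2ennreal (- (x * ereal (indicator A t))) = e2ennreal (- x) * indicator A t"
  by (simp_all add: indicator_def e2ennreal_neg flip: zero_ereal_def)

lemma pos_int_mult_indicator_mono:
  "A \<subseteq> B \<Longrightarrow> pos_int S (\<lambda>x. f x * ereal (indicator A x)) \<le> pos_int S (\<lambda>x. f x * ereal (indicator B x))"
  unfolding pos_int_def e2ennreal_mult_indicator
  by (intro nn_integral_mono mult_right_mono mult_left_mono) (auto simp: indicator_def)

lemma neg_int_mult_indicator_le: "neg_int S (\<lambda>x. f x * ereal (indicator A x)) \<le> neg_int S f"
  unfolding neg_int_def e2ennreal_mult_indicator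
  by (intro nn_integral_mono mult_right_mono) (auto simp: indicator_def)

lemma pos_int_eq_SUP_mult_indicator:
  fixes f :: "real \<Rightarrow> ereal" and A :: "nat \<Rightarrow> real set"
  assumes S: "S \<in> sets lebesgue" and f: "f \<in> borel_measurable (restrict_space lebesgue S)"
    and A: "incseq A" "\<And>k. A k \<in> sets lebesgue" "S \<subseteq> (\<Union>k. A k)"
  shows "pos_int S f = (SUP k. pos_int S (\<lambda>x. f x * ereal (indicator (A k) x)))"
proof -
  let ?M = "restrict_space lebesgue S"
  have meas: "(\<lambda>x. e2ennreal (f x) * indicator (A k) x) \<in> borel_measurable ?M" for k
  proof (rule borel_measurable_times_ennreal)
    show "(\<lambda>x. e2ennreal (f x)) \<in> borel_measurable ?M"
      using f measurable_e2ennreal by (rule measurable_compose)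
    show "indicator (A k) \<in> borel_measurable ?M"
      using A(2) by (intro measurable_restrict_space1) auto
  qed
  have incseq: "incseq (\<lambda>k x. e2ennreal (f x) * indicator (A k) x)"
  proof (intro monoI le_funI)
    fix k k' :: nat and x assume "k \<le> k'"
    then have "indicator (A k) x \<le> (indicator (A k') x :: ennreal)"
      using monoD[OF A(1)] by (auto simp: indicator_def)
    then show "e2ennreal (f x) * indicator (A k) x \<le> e2ennreal (f x) * indicator (A k') x"
      by (rule mult_left_mono) simp
  qed
  have "e2ennreal (f x) = (SUP k. e2ennreal (f x) * indicator (A k) x)" if x: "x \<in> S" for x
  proof -
    obtain k where "x \<in> A k"
      using A(3) x by auto
    then have "e2ennreal (f x) \<le> (SUP k. e2ennreal (f x) * indicator (A k) x)"
      by (intro SUP_upper2[of k]) auto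
    then show ?thesis
      by (intro antisym SUP_least) (auto simp: indicator_def)
  qed
  then have "(\<integral>\<^sup>+x. e2ennreal (f x) \<partial>?M) = (\<integral>\<^sup>+x. (SUP k. e2ennreal (f x) * indicator (A k) x) \<partial>?M)"
    by (intro nn_integral_cong) simp
  also have "\<dots> = (SUP k. \<integral>\<^sup>+x. e2ennreal (f x) * indicator (A k) x \<partial>?M)"
    by (rule nn_integral_monotone_convergence_SUP[OF incseq meas])
  finally show ?thesis
    unfolding pos_int_eq_nn_integral_restrict[OF S] e2ennreal_mult_indicator .
qed

lemma ext_integral_le_exhaust:
  fixes f :: "real \<Rightarrow> ereal" and A :: "nat \<Rightarrow> real set"
  assumes S: "S \<in> sets lebesgue" and f: "f \<in> borel_measurable (restrict_space lebesgue S)"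
    and A: "incseq A" "\<And>k. A k \<in> sets lebesgue" "S \<subseteq> (\<Union>k. A k)"
    and le: "\<And>e. 0 < e \<Longrightarrow>
      \<forall>\<^sub>F k in sequentially. ext_integral_le S (\<lambda>x. f x * ereal (indicator (A k) x)) (c + e)"
  shows "ext_integral_le S f c"
proof (cases "neg_int S f = \<infinity>")
  case False
  then obtain n where n: "neg_int S f = ennreal n" "0 \<le> n"
    by (cases "neg_int S f" rule: ennreal_cases) auto
  let ?P = "\<lambda>k. pos_int S (\<lambda>x. f x * ereal (indicator (A k) x))"
  have "enn2ereal (pos_int S f) \<le> ereal (c + n) + ereal e" if e: "0 < e" for e
  proof -
    obtain N where N: "\<And>k. N \<le> k \<Longrightarrow> ext_integral_le S (\<lambda>x. f x * ereal (indicator (A k) x)) (c + e)"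
      using le[OF e] by (auto simp: eventually_sequentially)
    have bound: "enn2ereal (?P k) \<le> ereal (c + n + e)" for k
    proof -
      have "enn2ereal (?P k) \<le> enn2ereal (?P (max k N))"
        using pos_int_mult_indicator_mono[OF monoD[OF A(1)]] by (simp add: less_eq_ennreal.rep_eq)
      also have "\<dots> \<le> ereal (c + e) + enn2ereal (neg_int S (\<lambda>x. f x * ereal (indicator (A (max k N)) x)))"
        using N[of "max k N"] by (simp add: ext_integral_le_def)
      also have "\<dots> \<le> ereal (c + e) + ereal n"
        using neg_int_mult_indicator_le[of S f "A (max k N)"] n
        by (intro add_left_mono) (simp add: less_eq_ennreal.rep_eq)
      finally show ?thesis by (simp add: ac_simps)
    qed
    then have "(SUP k. ?P k) \<le> ennreal (c + n + e)"
      by (intro SUP_least) (metis e2ennreal_enn2ereal e2ennreal_ereal e2ennreal_mono)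
    moreover have "0 \<le> c + n + e"
      using bound[of 0] by (metis enn2ereal_nonneg ereal_less_eq(5) order_trans)
    ultimately show ?thesis
      by (simp add: pos_int_eq_SUP_mult_indicator[OF S f A] less_eq_ennreal.rep_eq)
  qed
  then have "enn2ereal (pos_int S f) \<le> ereal (c + n)"
    by (rule ereal_le_epsilon2) simp
  then show ?thesis
    unfolding ext_integral_le_def n using n(2) by simp
qed (simp add: ext_integral_le_def)

lemma ext_integral_le_exhaust_01:
  fixes f :: "real \<Rightarrow> ereal"
  assumes f: "f \<in> borel_measurable (restrict_space lebesgue {0<..<1})"
    and le: "\<And>e. 0 < e \<Longrightarrow>
      \<forall>\<^sub>F a in at_right 0. ext_integral_le {0<..<1} (\<lambda>x. f x * ereal (indicator {a<..1 - a} x)) (c + e)"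
  shows "ext_integral_le {0<..<1} f c"
proof -
  obtain a :: "nat \<Rightarrow> real" where a_lim: "filterlim a (at_right 0) sequentially"
    and "\<And>n. 0 < a n" "\<And>n. a n \<le> 1" "decseq a"
    by (rule at_right_0_sequenceE[OF zero_less_one]) blast
  show ?thesis
  proof (rule ext_integral_le_exhaust[OF _ f, of "\<lambda>k. {a k<..1 - a k}"])
    show "incseq (\<lambda>k. {a k<..1 - a k})"
    proof (intro monoI subsetI)
      fix k k' :: nat and x assume "k \<le> k'" "x \<in> {a k<..1 - a k}"
      moreover have "a k' \<le> a k"
        using \<open>decseq a\<close> \<open>k \<le> k'\<close> by (simp add: decseq_def monotone_on_def)
      ultimately show "x \<in> {a k'<..1 - a k'}"
        by auto
    qed
    show "{0<..<1} \<subseteq> (\<Union>k. {a k<..1 - a k})"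
    proof
      fix t :: real assume t: "t \<in> {0<..<1}"
      have "a \<longlonglongrightarrow> 0"
        using a_lim by (simp add: filterlim_at)
      then have "\<forall>\<^sub>F k in sequentially. a k < min t (1 - t)"
        using t by (intro order_tendstoD(2)) auto
      then obtain k where "a k < min t (1 - t)"
        by (auto simp: eventually_sequentially)
      then show "t \<in> (\<Union>k. {a k<..1 - a k})"
        by auto
    qed
    show "\<forall>\<^sub>F k in sequentially. ext_integral_le {0<..<1} (\<lambda>x. f x * ereal (indicator {a k<..1 - a k} x)) (c + e)"
      if "0 < e" for e
      using le[OF that] a_lim by (rule eventually_compose_filterlim)
  qed (auto intro: sets_completionI_sets)
qed

lemma test_fun01_derivs:
  assumes "test_fun01 \<phi>"
  shows "(\<phi> has_real_derivative deriv \<phi> x) (at x)"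
    and "(deriv \<phi> has_real_derivative deriv (deriv \<phi>) x) (at x)"
    and "continuous_on UNIV \<phi>" "continuous_on UNIV (deriv \<phi>)" "continuous_on UNIV (deriv (deriv \<phi>))"
proof -
  have D: "((deriv ^^ k) \<phi> has_real_derivative (deriv ^^ Suc k) \<phi> x) (at x)" for k x
    using assms unfolding test_fun01_def by blast
  show "(\<phi> has_real_derivative deriv \<phi> x) (at x)"
    using D[of 0] by simp
  show "(deriv \<phi> has_real_derivative deriv (deriv \<phi>) x) (at x)"
    using D[of 1] by simp
  show "continuous_on UNIV \<phi>" "continuous_on UNIV (deriv \<phi>)" "continuous_on UNIV (deriv (deriv \<phi>))"
    using D[of 0] D[of 1] D[of 2]
    by (auto intro!: continuous_at_imp_continuous_on DERIV_isCont simp: numeral_2_eq_2)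
qed

lemma continuous_on_UNIV_Icc_boundE:
  fixes f :: "real \<Rightarrow> real"
  assumes "continuous_on UNIV f"
  obtains B where "0 \<le> B" "\<And>x. x \<in> {a..b} \<Longrightarrow> \<bar>f x\<bar> \<le> B"
  using continuous_on_compact_bound[OF compact_Icc continuous_on_subset[OF assms subset_UNIV]]
  by (metis real_norm_def)

lemma deriv_eq_0_outside_support:
  fixes f :: "real \<Rightarrow> real"
  assumes f: "(f has_real_derivative f') (at x)"
    and supp: "\<And>y. y \<notin> {a..b} \<Longrightarrow> f y = 0" and x: "x \<notin> {a..b}"
  shows "f' = 0"
proof -
  have "((\<lambda>_. 0) has_real_derivative f') (at x)"
    using f by (rule has_field_derivative_transform_within_open[where S="- {a..b}"]) (use supp x in auto)
  then show ?thesis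
    using DERIV_const DERIV_unique by blast
qed

lemma backward_difference_bounds:
  fixes \<phi> \<phi>' \<phi>'' :: "real \<Rightarrow> real"
  assumes d1: "\<And>x. (\<phi> has_real_derivative \<phi>' x) (at x)"
    and d2: "\<And>x. (\<phi>' has_real_derivative \<phi>'' x) (at x)"
    and M1: "\<And>x. x \<in> {p..q} \<Longrightarrow> \<bar>\<phi>' x\<bar> \<le> M1" and M2: "\<And>x. x \<in> {p..q} \<Longrightarrow> \<bar>\<phi>'' x\<bar> \<le> M2"
    and v: "p \<le> v - h" "v \<le> q" "0 < h"
  shows "\<bar>\<phi> (v - h) - \<phi> v\<bar> \<le> M1 * h" and "\<bar>\<phi> (v - h) - \<phi> v + h * \<phi>' v\<bar> \<le> M2 * h\<^sup>2"
proof -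
  obtain z where z: "v - h < z" "z < v" "\<phi> v - \<phi> (v - h) = h * \<phi>' z"
    using MVT2[of "v - h" v \<phi> \<phi>'] v d1 by auto
  obtain y where y: "z < y" "y < v" "\<phi>' v - \<phi>' z = (v - z) * \<phi>'' y"
    using MVT2[of z v \<phi>' \<phi>''] z d2 by blast
  show "\<bar>\<phi> (v - h) - \<phi> v\<bar> \<le> M1 * h"
    using z v M1[of z] by (simp add: abs_minus_commute[of "\<phi> (v - h)"] abs_mult mult.commute mult_right_mono)
  have "\<phi> (v - h) - \<phi> v + h * \<phi>' v = h * (\<phi>' v - \<phi>' z)"
    using z(3) by (simp add: algebra_simps)
  then have "\<bar>\<phi> (v - h) - \<phi> v + h * \<phi>' v\<bar> = h * ((v - z) * \<bar>\<phi>'' y\<bar>)"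
    using y(3) z(2) v(3) by (simp add: abs_mult)
  also have "\<dots> \<le> h * (h * M2)"
    using z y v M2[of y] by (intro mult_left_mono mult_mono) auto
  finally show "\<bar>\<phi> (v - h) - \<phi> v + h * \<phi>' v\<bar> \<le> M2 * h\<^sup>2"
    by (simp add: power2_eq_square mult_ac)
qed

lemma product_perturbation_le:
  fixes e e' D d h :: real
  assumes "\<bar>e - e'\<bar> \<le> L * h" "\<bar>e'\<bar> \<le> M" "\<bar>D\<bar> \<le> M1 * h" "\<bar>D + h * d\<bar> \<le> M2 * h\<^sup>2"
  shows "e * D \<le> h * (- (e' * d)) + (L * M1 + M * M2) * h\<^sup>2"
proof -
  have "\<bar>(e - e') * D\<bar> \<le> (L * h) * (M1 * h)"
    unfolding abs_mult using assms by (intro mult_mono) auto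
  moreover have "\<bar>e' * (D + h * d)\<bar> \<le> M * (M2 * h\<^sup>2)"
    unfolding abs_mult using assms by (intro mult_mono) auto
  moreover have "e * D = h * (- (e' * d)) + e' * (D + h * d) + (e - e') * D"
    by (simp add: algebra_simps)
  ultimately show ?thesis
    by (simp add: abs_le_iff power2_eq_square algebra_simps)
qed

section \<open>The kernel and its diagonal\<close>

locale mono_lipschitz_kernel =
  fixes \<eta> :: "real \<Rightarrow> real \<Rightarrow> real"
  assumes cont: "\<forall>s\<in>{0..1}. continuous_on {0..1} (\<lambda>t. \<eta> t s)"
    and lip: "\<forall>\<epsilon>>0. \<exists>L. \<forall>s\<in>{0..1}. L-lipschitz_on {\<epsilon>..1} (\<lambda>t. \<eta> t s)"
    and mono: "\<forall>t\<in>{0..1}. mono_on {0..1} (\<lambda>s. \<eta> t s)"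
begin

lemma eta_monoD: "t \<in> {0..1} \<Longrightarrow> s \<in> {0..1} \<Longrightarrow> s' \<in> {0..1} \<Longrightarrow> s \<le> s' \<Longrightarrow> \<eta> t s \<le> \<eta> t s'"
  using mono by (auto simp: mono_on_def)

lemma eta_lipschitzD:
  assumes "\<forall>s\<in>{0..1}. L-lipschitz_on {\<epsilon>..1} (\<lambda>t. \<eta> t s)" "s \<in> {0..1}" "t \<in> {\<epsilon>..1}" "t' \<in> {\<epsilon>..1}"
  shows "\<bar>\<eta> t s - \<eta> t' s\<bar> \<le> L * \<bar>t - t'\<bar>"
  using lipschitz_onD[of L "{\<epsilon>..1}" "\<lambda>t. \<eta> t s" t t'] assms by (auto simp: dist_real_def)

text \<open>Monotonicity in \<open>s\<close> squeezes \<open>\<eta> t s\<close> between the continuous functions \<open>\<eta> t 0\<close>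
  and \<open>\<eta> t 1\<close>.\<close>
lemma eta_boundedE:
  obtains M where "0 \<le> M" "\<And>t s. t \<in> {0..1} \<Longrightarrow> s \<in> {0..1} \<Longrightarrow> \<bar>\<eta> t s\<bar> \<le> M"
proof -
  have "continuous_on {0..1} (\<lambda>t. \<eta> t 0)" "continuous_on {0..1} (\<lambda>t. \<eta> t 1)"
    using cont by auto
  then obtain M0 M1 where M0: "\<And>t. t \<in> {0..1} \<Longrightarrow> \<bar>\<eta> t 0\<bar> \<le> M0"
    and M1: "\<And>t. t \<in> {0..1} \<Longrightarrow> \<bar>\<eta> t 1\<bar> \<le> M1"
    using continuous_on_compact_bound[OF compact_Icc] by (metis real_norm_def)
  have "\<bar>\<eta> t s\<bar> \<le> max M0 M1" if "t \<in> {0..1}" "s \<in> {0..1}" for t s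
    using eta_monoD[of t 0 s] eta_monoD[of t s 1] M0[of t] M1[of t] that by auto
  moreover have "0 \<le> max M0 M1"
    using M0[of 0] by auto
  ultimately show ?thesis using that by blast
qed

lemma borel_measurable_shifted_diag:
  assumes "0 < \<epsilon>" "S \<in> sets borel"
    and "\<And>t. t \<in> S \<Longrightarrow> t + c1 \<in> {\<epsilon>..1} \<and> t + c2 \<in> {0..1}"
  shows "(\<lambda>x. if x \<in> S then \<eta> (x + c1) (x + c2) else 0) \<in> borel_measurable borel"
proof -
  obtain L where L: "\<forall>s\<in>{0..1}. L-lipschitz_on {\<epsilon>..1} (\<lambda>t. \<eta> t s)"
    using lip assms(1) by blast
  show ?thesis
  proof (rule borel_measurable_mono_up_to_linear[OF assms(2), of _ L])
    fix x y assume xy: "x \<in> S" "y \<in> S" "x \<le> y"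
    have "\<eta> (x + c1) (x + c2) \<le> \<eta> (y + c1) (x + c2) + L * (y - x)"
      using eta_lipschitzD[OF L, of "x + c2" "x + c1" "y + c1"] assms(3)[OF xy(1)] assms(3)[OF xy(2)] xy(3)
      by auto
    also have "\<eta> (y + c1) (x + c2) \<le> \<eta> (y + c1) (y + c2)"
      using eta_monoD[of "y + c1" "x + c2" "y + c2"] assms(1,3) xy by force
    finally show "\<eta> (x + c1) (x + c2) \<le> \<eta> (y + c1) (y + c2) + L * (y - x)" by simp
  qed
qed

lemma borel_measurable_shifted_diag_restrict:
  assumes "0 < \<epsilon>" "S \<in> sets borel"
    and "\<And>t. t \<in> S \<Longrightarrow> t + c1 \<in> {\<epsilon>..1} \<and> t + c2 \<in> {0..1}"
  shows "(\<lambda>t. \<eta> (t + c1) (t + c2)) \<in> borel_measurable (restrict_space lebesgue S)"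
  using borel_measurable_lebesgueI[OF borel_measurable_shifted_diag[OF assms]] assms(2)
    measurable_restrict_space_iff[of S lebesgue 0 borel "\<lambda>t. \<eta> (t + c1) (t + c2)"]
  by simp

lemma integrable_shifted_diag_weight:
  assumes "0 < \<epsilon>" and shift: "\<And>u. u \<in> {a..b} \<Longrightarrow> u + c1 \<in> {\<epsilon>..1} \<and> u + c2 \<in> {0..1}"
    and w: "w \<in> borel_measurable borel" "\<And>u. \<bar>w u\<bar> \<le> W" "\<And>u. u \<notin> {a..b} \<Longrightarrow> w u = 0"
  shows "integrable lebesgue (\<lambda>u. \<eta> (u + c1) (u + c2) * w u)"
proof -
  obtain M where M: "0 \<le> M" "\<And>t s. t \<in> {0..1} \<Longrightarrow> s \<in> {0..1} \<Longrightarrow> \<bar>\<eta> t s\<bar> \<le> M"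
    using eta_boundedE by blast
  have "(\<lambda>u. (if u \<in> {a..b} then \<eta> (u + c1) (u + c2) else 0) * w u) \<in> borel_measurable borel"
    using borel_measurable_shifted_diag[OF assms(1) _ shift, of "{a..b}"] w(1)
    by (intro borel_measurable_times) auto
  also have "(\<lambda>u. (if u \<in> {a..b} then \<eta> (u + c1) (u + c2) else 0) * w u) = (\<lambda>u. \<eta> (u + c1) (u + c2) * w u)"
    using w(3) by auto
  finally show ?thesis
  proof (rule integrable_bounded_support[OF borel_measurable_lebesgueI])
    show "\<bar>\<eta> (u + c1) (u + c2) * w u\<bar> \<le> M * W" if "u \<in> {a..b}" for u
      unfolding abs_mult using M shift[OF that] w(2)[of u] assms(1) by (intro mult_mono) auto
  qed (use w(3) in simp)
qed

lemma borel_measurable_diag: "(\<lambda>t. \<eta> t t) \<in> borel_measurable (restrict_space lebesgue {0<..<1})"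
proof (rule borel_measurable_on_01_from_subintervals)
  fix a b :: real assume "0 < a" "a < b" "b < 1"
  then show "(\<lambda>t. \<eta> t t) \<in> borel_measurable (restrict_space lebesgue {a<..<b})"
    using borel_measurable_shifted_diag_restrict[of a "{a<..<b}" 0 0] by simp
qed

lemma set_integrable_diag_mult:
  assumes g: "continuous_on UNIV g"
  shows "set_integrable lebesgue {0<..<1} (\<lambda>t. \<eta> t t * g t)"
proof -
  obtain M where M: "0 \<le> M" "\<And>t s. t \<in> {0..1} \<Longrightarrow> s \<in> {0..1} \<Longrightarrow> \<bar>\<eta> t s\<bar> \<le> M"
    using eta_boundedE by blast
  obtain G where G: "0 \<le> G" "\<And>x. x \<in> {0..1} \<Longrightarrow> \<bar>g x\<bar> \<le> G"
    using continuous_on_UNIV_Icc_boundE[OF g] by blast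
  have "(\<lambda>t. \<eta> t t * g t) \<in> borel_measurable (restrict_space lebesgue {0<..<1})"
    using borel_measurable_diag measurable_restrict_space1[OF
        borel_measurable_lebesgueI[OF borel_measurable_continuous_onI[OF g]]]
    by (rule borel_measurable_times)
  then show ?thesis
    unfolding set_integrable_def using M G
    by (intro integrable_bounded_support[where a=0 and b=1 and B="M * G"])
      (auto simp: borel_measurable_restrict_space_iff abs_mult indicator_def intro: mult_mono)
qed

definition left_quot :: "real \<Rightarrow> real \<Rightarrow> real" where
  "left_quot t h = (\<eta> t t - \<eta> (t - h) t) / h"

definition right_quot :: "real \<Rightarrow> real \<Rightarrow> real" where
  "right_quot t h = (\<eta> t (t + h) - \<eta> t t) / h"

definition dini_rate :: "real \<Rightarrow> ereal" where
  "dini_rate t = Liminf (at_right 0) (\<lambda>h. ereal (left_quot t h))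
    + Liminf (at_right 0) (\<lambda>h. ereal (right_quot t h))"

lemma left_quot_usc:
  assumes t: "t \<in> {0<..<1}" and h: "0 < h" "h < t" and d: "0 < d"
  shows "\<forall>\<^sub>F q in at_left h. left_quot t q < left_quot t h + d"
proof -
  have "isCont (\<lambda>x. \<eta> x t) (t - h)"
    using cont t h by (intro continuous_on_interior[of "{0..1}"]) auto
  then have "((\<lambda>q. \<eta> (t - q) t) \<longlongrightarrow> \<eta> (t - h) t) (at h)"
    by (rule isCont_tendsto_compose) (intro tendsto_intros)
  then have "((\<lambda>q. left_quot t q) \<longlongrightarrow> left_quot t h) (at h)"
    unfolding left_quot_def using h by (intro tendsto_intros) auto
  then have "((\<lambda>q. left_quot t q) \<longlongrightarrow> left_quot t h) (at_left h)"
    by (rule filterlim_mono) (auto simp: at_le)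
  then show ?thesis using d by (intro order_tendstoD(2)) auto
qed

text \<open>\<open>\<eta> t (t + q)\<close> need not be continuous in \<open>q\<close>, but for \<open>q < h\<close> it is bounded by
  \<open>\<eta> t (t + h)\<close> by monotonicity in the second variable.\<close>
lemma right_quot_usc:
  assumes t: "t \<in> {0<..<1}" and h: "0 < h" "h < 1 - t" and d: "0 < d"
  shows "\<forall>\<^sub>F q in at_left h. right_quot t q < right_quot t h + d"
proof -
  have "((\<lambda>q. (\<eta> t (t + h) - \<eta> t t) / q) \<longlongrightarrow> right_quot t h) (at h)"
    unfolding right_quot_def using h by (intro tendsto_intros) auto
  then have "((\<lambda>q. (\<eta> t (t + h) - \<eta> t t) / q) \<longlongrightarrow> right_quot t h) (at_left h)"
    by (rule filterlim_mono) (auto simp: at_le)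
  then have "\<forall>\<^sub>F q in at_left h. (\<eta> t (t + h) - \<eta> t t) / q < right_quot t h + d"
    using d by (intro order_tendstoD(2)) auto
  moreover have "\<forall>\<^sub>F q in at_left h. q \<in> {0<..<h}"
    using h by (intro eventually_at_left_real) auto
  ultimately show ?thesis
  proof eventually_elim
    case (elim q)
    have "\<eta> t (t + q) \<le> \<eta> t (t + h)"
      using elim(2) t h by (intro eta_monoD) auto
    then have "right_quot t q \<le> (\<eta> t (t + h) - \<eta> t t) / q"
      unfolding right_quot_def using elim(2) by (intro divide_right_mono) auto
    then show ?case using elim(1) by linarith
  qed
qed

lemma borel_measurable_dini_rate: "dini_rate \<in> borel_measurable (restrict_space lebesgue {0<..<1})"
proof (rule borel_measurable_on_01_from_subintervals)
  fix a b :: real assume ab: "0 < a" "a < b" "b < 1"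
  let ?M = "restrict_space lebesgue {a<..<b}"
  define c where "c = min (a/2) (1 - b)"
  have c: "0 < c" "c \<le> a/2" "c \<le> 1 - b" using ab by (auto simp: c_def min_def)
  have diag: "(\<lambda>t. \<eta> t t) \<in> borel_measurable ?M"
    using borel_measurable_shifted_diag_restrict[of a "{a<..<b}" 0 0] ab by simp
  have "(\<lambda>t. Liminf (at_right 0) (\<lambda>h. ereal (left_quot t h))) \<in> borel_measurable ?M"
  proof (rule borel_measurable_Liminf_at_right_0[OF c(1)])
    fix h assume "0 < h" "h < c"
    then have "(\<lambda>t. \<eta> (t + - h) (t + 0)) \<in> borel_measurable ?M"
      using ab c by (intro borel_measurable_shifted_diag_restrict[of "a/2"]) auto
    then show "(\<lambda>t. left_quot t h) \<in> borel_measurable ?M"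
      unfolding left_quot_def using diag by simp
  qed (use c ab in \<open>auto intro: left_quot_usc\<close>)
  moreover have "(\<lambda>t. Liminf (at_right 0) (\<lambda>h. ereal (right_quot t h))) \<in> borel_measurable ?M"
  proof (rule borel_measurable_Liminf_at_right_0[OF c(1)])
    fix h assume "0 < h" "h < c"
    then have "(\<lambda>t. \<eta> (t + 0) (t + h)) \<in> borel_measurable ?M"
      using ab c by (intro borel_measurable_shifted_diag_restrict[of a]) auto
    then show "(\<lambda>t. right_quot t h) \<in> borel_measurable ?M"
      unfolding right_quot_def using diag by simp
  qed (use c ab in \<open>auto intro: right_quot_usc\<close>)
  ultimately show "dini_rate \<in> borel_measurable ?M"
    unfolding dini_rate_def[abs_def] by (rule borel_measurable_ereal_add)
qed

lemma quot_bounds: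
  assumes Lip: "\<forall>s\<in>{0..1}. L-lipschitz_on {\<epsilon>..1} (\<lambda>t. \<eta> t s)"
    and u: "\<epsilon> \<le> u - h" "u + h \<le> 1" and h: "0 < h" and \<epsilon>: "0 \<le> \<epsilon>"
  shows "- L \<le> left_quot u h" and "0 \<le> right_quot u h"
proof -
  have "\<bar>\<eta> u u - \<eta> (u - h) u\<bar> \<le> L * \<bar>u - (u - h)\<bar>"
    using u h \<epsilon> by (intro eta_lipschitzD[OF Lip]) auto
  then show "- L \<le> left_quot u h"
    unfolding left_quot_def using h by (simp add: field_simps)
  have "\<eta> u u \<le> \<eta> u (u + h)"
    using u h \<epsilon> by (intro eta_monoD) auto
  then show "0 \<le> right_quot u h"
    unfolding right_quot_def using h by simp
qed

lemma eventually_quot_bounds: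
  assumes Lip: "\<forall>s\<in>{0..1}. L-lipschitz_on {\<epsilon>..1} (\<lambda>t. \<eta> t s)"
    and u: "\<epsilon> < u" "u < 1" and \<epsilon>: "0 \<le> \<epsilon>"
  shows "\<forall>\<^sub>F h in at_right 0. - L \<le> left_quot u h \<and> 0 \<le> right_quot u h"
proof -
  have "\<forall>\<^sub>F h in at_right 0. h \<in> {0<..<min (u - \<epsilon>) (1 - u)}"
    using u by (intro eventually_at_right_real) auto
  then show ?thesis
    by eventually_elim (use quot_bounds[OF Lip _ _ _ \<epsilon>] in auto)
qed

lemma dini_rate_ge:
  assumes Lip: "\<forall>s\<in>{0..1}. L-lipschitz_on {\<epsilon>..1} (\<lambda>t. \<eta> t s)"
    and u: "\<epsilon> < u" "u < 1" and \<epsilon>: "0 \<le> \<epsilon>"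
  shows "- ereal L \<le> dini_rate u"
proof -
  note ev = eventually_quot_bounds[OF assms]
  have "ereal (- L) \<le> Liminf (at_right 0) (\<lambda>h. ereal (left_quot u h))"
    using ev by (intro Liminf_bounded) (auto elim: eventually_mono)
  moreover have "0 \<le> Liminf (at_right 0) (\<lambda>h. ereal (right_quot u h))"
    using ev by (intro Liminf_bounded) (auto elim: eventually_mono)
  ultimately show ?thesis
    unfolding dini_rate_def using add_mono by fastforce
qed

subsection \<open>Weighted integrals of the Dini rate\<close>

text \<open>Discrete integration by parts: shifting \<open>v = u + h\<close> in the term \<open>\<eta> u (u + h) * w u\<close>
  moves the difference quotient from \<open>\<eta>\<close> onto the weight.\<close>
lemma integral_quot_weight:
  assumes ab: "0 < a" "b < 1"
    and w: "w \<in> borel_measurable borel" "\<And>u. \<bar>w u\<bar> \<le> W" "\<And>u. u \<notin> {a..b} \<Longrightarrow> w u = 0"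
    and h: "0 < h" "h \<le> a/2" "h \<le> 1 - b"
  shows "integrable lebesgue (\<lambda>u. (left_quot u h + right_quot u h) * w u)"
    and "integrable lebesgue (\<lambda>v. \<eta> (v - h) v * (w (v - h) - w v))"
    and "(\<integral>u. (left_quot u h + right_quot u h) * w u \<partial>lebesgue)
      = (\<integral>v. \<eta> (v - h) v * (w (v - h) - w v) \<partial>lebesgue) / h"
proof -
  let ?P = "\<lambda>u. \<eta> (u + 0) (u + h) * w u" and ?Q = "\<lambda>u. \<eta> (u + - h) (u + 0) * w u"
  have iP: "integrable lebesgue ?P"
    using ab h by (intro integrable_shifted_diag_weight[of a _ _ _ _ w W] w) auto
  have iQ: "integrable lebesgue ?Q"
    using ab h by (intro integrable_shifted_diag_weight[of "a/2" _ _ _ _ w W] w) auto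
  have iPs: "integrable lebesgue (\<lambda>v. ?P (v - h))"
    using lebesgue_integrable_real_affine_iff[of 1 ?P "- h"] iP by simp
  have intPs: "(\<integral>v. ?P (v - h) \<partial>lebesgue) = integral\<^sup>L lebesgue ?P"
    using lebesgue_integral_real_affine[of 1 ?P "- h"] by simp
  have lr: "left_quot u h + right_quot u h = (\<eta> u (u + h) - \<eta> (u - h) u) / h" for u
    unfolding left_quot_def right_quot_def by (simp add: diff_divide_distrib)
  have quot: "(left_quot u h + right_quot u h) * w u = (?P u - ?Q u) / h" for u
    unfolding lr by (simp add: left_diff_distrib)
  have shift: "\<eta> (v - h) v * (w (v - h) - w v) = ?P (v - h) - ?Q v" for v
    by (simp add: algebra_simps)
  show "integrable lebesgue (\<lambda>u. (left_quot u h + right_quot u h) * w u)"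
    unfolding quot using iP iQ by auto
  show "integrable lebesgue (\<lambda>v. \<eta> (v - h) v * (w (v - h) - w v))"
    unfolding shift using iPs iQ by auto
  show "(\<integral>u. (left_quot u h + right_quot u h) * w u \<partial>lebesgue)
      = (\<integral>v. \<eta> (v - h) v * (w (v - h) - w v) \<partial>lebesgue) / h"
    unfolding quot shift using iP iQ iPs intPs by simp
qed

lemma integral_quot_weight_le:
  assumes ab: "0 < a" "b < 1"
    and w: "w \<in> borel_measurable borel" "\<And>u. \<bar>w u\<bar> \<le> W" "\<And>u. u \<notin> {a..b} \<Longrightarrow> w u = 0"
    and h: "0 < h" "h \<le> a/2" "h \<le> 1 - b"
    and T: "integrable lebesgue T" "\<And>v. \<eta> (v - h) v * (w (v - h) - w v) \<le> h * T v"
  shows "(\<integral>u. (left_quot u h + right_quot u h) * w u \<partial>lebesgue) \<le> integral\<^sup>L lebesgue T"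
proof -
  note I = integral_quot_weight[OF ab w h]
  have "(\<integral>u. (left_quot u h + right_quot u h) * w u \<partial>lebesgue)
      = (\<integral>v. \<eta> (v - h) v * (w (v - h) - w v) \<partial>lebesgue) / h"
    by (rule I(3))
  also have "\<dots> \<le> integral\<^sup>L lebesgue T"
  proof -
    have "(\<integral>v. \<eta> (v - h) v * (w (v - h) - w v) \<partial>lebesgue) \<le> (\<integral>v. h * T v \<partial>lebesgue)"
      using I(2) T by (intro integral_mono) auto
    then show ?thesis
      using h(1) by (simp add: pos_divide_le_eq mult.commute)
  qed
  finally show ?thesis .
qed

lemma dini_rate_weight_le_liminf:
  assumes hs: "filterlim hs (at_right 0) sequentially"
    and Lip: "\<forall>s\<in>{0..1}. L-lipschitz_on {\<epsilon>..1} (\<lambda>t. \<eta> t s)" and \<epsilon>: "0 \<le> \<epsilon>"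
    and w: "0 \<le> w" "w \<noteq> 0 \<Longrightarrow> \<epsilon> < u \<and> u < 1"
  shows "e2ennreal ((dini_rate u + ereal L) * ereal w)
    \<le> liminf (\<lambda>n. ennreal ((left_quot u (hs n) + right_quot u (hs n) + L) * w))"
proof (cases "w = 0")
  case False
  then have "\<forall>\<^sub>F h in at_right 0. - L \<le> left_quot u h \<and> 0 \<le> right_quot u h"
    using w(2) by (intro eventually_quot_bounds[OF Lip _ _ \<epsilon>]) auto
  then show ?thesis
    unfolding dini_rate_def using w(1)
    by (intro e2ennreal_Liminf_add_mult_le_liminf[OF hs]) (auto elim: eventually_mono)
qed (simp add: e2ennreal_neg flip: zero_ereal_def)

lemma weighted_dini_rate_bound:
  assumes ab: "0 < a" "a \<le> b" "b < 1"
    and w: "w \<in> borel_measurable borel" "\<And>u. 0 \<le> w u" "\<And>u. w u \<le> W" "\<And>u. u \<notin> {a..b} \<Longrightarrow> w u = 0"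
    and Lip: "\<forall>s\<in>{0..1}. L-lipschitz_on {a/2..1} (\<lambda>t. \<eta> t s)"
    and bound: "\<And>e. 0 < e \<Longrightarrow> \<forall>\<^sub>F h in at_right 0. \<exists>T. integrable lebesgue T
      \<and> (\<forall>v. \<eta> (v - h) v * (w (v - h) - w v) \<le> h * T v) \<and> integral\<^sup>L lebesgue T \<le> K + e"
  shows "enn2ereal (\<integral>\<^sup>+u. e2ennreal ((dini_rate u + ereal L) * ereal (w u)) \<partial>lebesgue)
    \<le> ereal (K + L * integral\<^sup>L lebesgue w)"
proof -
  have "0 < min (a/2) (1 - b)"
    using ab by simp
  then obtain hs where hs_lim: "filterlim hs (at_right 0) sequentially"
    and "\<And>n. 0 < hs n" "\<And>n. hs n \<le> min (a/2) (1 - b)"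
    using at_right_0_sequenceE by blast
  then have hs: "0 < hs n" "hs n \<le> a/2" "hs n \<le> 1 - b" for n
    by auto
  have w_abs: "\<bar>w u\<bar> \<le> W" for u
    using w(2,3) by simp
  have iw: "integrable lebesgue w"
    using w w_abs by (intro integrable_bounded_support borel_measurable_lebesgueI) auto
  define G where "G n u = (left_quot u (hs n) + right_quot u (hs n) + L) * w u" for n u
  have G_split: "G n = (\<lambda>u. (left_quot u (hs n) + right_quot u (hs n)) * w u + L * w u)" for n
    unfolding G_def by (simp add: fun_eq_iff algebra_simps)
  note quot_int = integral_quot_weight(1)[OF ab(1,3) w(1) w_abs w(4) hs]
  have G_int: "integrable lebesgue (G n)" for n
    unfolding G_split using quot_int iw by auto
  have G_nonneg: "0 \<le> G n u" for n u
    using quot_bounds[OF Lip, of u "hs n"] hs[of n] ab w(2)[of u] w(4)[of u]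
    unfolding G_def by (cases "u \<in> {a..b}") auto
  have G_le: "\<forall>\<^sub>F n in sequentially. integral\<^sup>L lebesgue (G n) \<le> K + L * integral\<^sup>L lebesgue w + e"
    if "0 < e" for e
    using eventually_compose_filterlim[OF bound[OF that] hs_lim]
  proof eventually_elim
    case (elim n)
    then have "(\<integral>u. (left_quot u (hs n) + right_quot u (hs n)) * w u \<partial>lebesgue) \<le> K + e"
      using integral_quot_weight_le[OF ab(1,3) w(1) w_abs w(4) hs] by force
    then show ?case
      unfolding G_split using quot_int iw by simp
  qed
  have G_liminf: "e2ennreal ((dini_rate u + ereal L) * ereal (w u)) \<le> liminf (\<lambda>n. ennreal (G n u))" for u
  proof -
    have "w u \<noteq> 0 \<Longrightarrow> a/2 < u \<and> u < 1"
      using w(4)[of u] ab by (cases "u \<in> {a..b}") auto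
    then show ?thesis
      unfolding G_def using ab w(2)[of u] by (intro dini_rate_weight_le_liminf[OF hs_lim Lip]) auto
  qed
  show ?thesis
    using nn_integral_le_of_liminf_integrals[OF G_int G_nonneg G_liminf G_le] by simp
qed

text \<open>The hypothesis bounds \<open>lim sup (1/h) \<integral> \<eta> (v - h) v (w (v - h) - w v) dv\<close> as
  \<open>h \<rightarrow> 0+\<close>, a discrete form of \<open>- \<integral> \<delta> w'\<close>, by \<open>K\<close>.\<close>
lemma ext_integral_le_dini_rate_weight:
  assumes ab: "0 < a" "a \<le> b" "b < 1"
    and w: "w \<in> borel_measurable borel" "\<And>u. 0 \<le> w u" "\<And>u. w u \<le> W" "\<And>u. u \<notin> {a..b} \<Longrightarrow> w u = 0"
    and bound: "\<And>e. 0 < e \<Longrightarrow> \<forall>\<^sub>F h in at_right 0. \<exists>T. integrable lebesgue T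
      \<and> (\<forall>v. \<eta> (v - h) v * (w (v - h) - w v) \<le> h * T v) \<and> integral\<^sup>L lebesgue T \<le> K + e"
  shows "ext_integral_le {0<..<1} (\<lambda>u. dini_rate u * ereal (w u)) K"
proof -
  have "0 < a/2"
    using ab by simp
  then obtain L where Lip: "\<forall>s\<in>{0..1}. L-lipschitz_on {a/2..1} (\<lambda>t. \<eta> t s)"
    using lip by blast
  then have L: "0 \<le> L"
    using lipschitz_on_nonneg by force
  have "w u = 0" if "u \<notin> {0<..<1}" for u
    using that ab w(4) by auto
  moreover have "integrable lebesgue w"
    using w by (intro integrable_bounded_support[where B=W] borel_measurable_lebesgueI) auto
  moreover have "- ereal L \<le> dini_rate u" if "0 < w u" for u
  proof -
    have "u \<in> {a..b}"
      using that w(4)[of u] by (metis less_irrefl)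
    then show ?thesis
      using ab by (intro dini_rate_ge[OF Lip]) auto
  qed
  ultimately show ?thesis
    using weighted_dini_rate_bound[OF ab w Lip bound]
    by (intro ext_integral_le_weighted[OF _ borel_measurable_dini_rate _ w(2) _ L]) auto
qed

subsection \<open>Test functions and intervals as weights\<close>

text \<open>The \<open>O(h\<^sup>2)\<close> error comes from Taylor's formula for \<open>\<phi>\<close> at \<open>v\<close> and the Lipschitz
  bound for \<open>\<eta>\<close> in its first variable.\<close>
lemma test_fun_difference_le:
  assumes tf: "test_fun01 \<phi>" and ab: "0 < a" "b < 1" and supp: "\<And>x. x \<notin> {a..b} \<Longrightarrow> \<phi> x = 0"
    and Lip: "\<forall>s\<in>{0..1}. L-lipschitz_on {a/2..1} (\<lambda>t. \<eta> t s)"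
    and M: "\<And>t s. t \<in> {0..1} \<Longrightarrow> s \<in> {0..1} \<Longrightarrow> \<bar>\<eta> t s\<bar> \<le> M"
    and M1: "\<And>x. x \<in> {0..1} \<Longrightarrow> \<bar>deriv \<phi> x\<bar> \<le> M1"
    and M2: "\<And>x. x \<in> {0..1} \<Longrightarrow> \<bar>deriv (deriv \<phi>) x\<bar> \<le> M2"
    and h: "0 < h" "h \<le> a/2" "h < 1 - b"
  shows "\<eta> (v - h) v * (\<phi> (v - h) - \<phi> v)
    \<le> h * (- (indicator {0<..<1} v * (\<eta> v v * deriv \<phi> v)) + (L * M1 + M * M2) * h * indicator {0<..<1} v)"
proof (cases "v \<in> {0<..<1} \<and> a \<le> v \<and> v - h \<le> b")
  case True
  note d = test_fun01_derivs[OF tf]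
  have v: "a/2 \<le> v - h" "0 \<le> v - h" "v \<le> 1"
    using True h ab by auto
  have "\<eta> (v - h) v * (\<phi> (v - h) - \<phi> v) \<le> h * (- (\<eta> v v * deriv \<phi> v)) + (L * M1 + M * M2) * h\<^sup>2"
  proof (rule product_perturbation_le)
    show "\<bar>\<eta> (v - h) v - \<eta> v v\<bar> \<le> L * h"
      using eta_lipschitzD[OF Lip, of v "v - h" v] v h by auto
    show "\<bar>\<eta> v v\<bar> \<le> M"
      using M v h by auto
    show "\<bar>\<phi> (v - h) - \<phi> v\<bar> \<le> M1 * h" "\<bar>\<phi> (v - h) - \<phi> v + h * deriv \<phi> v\<bar> \<le> M2 * h\<^sup>2"
      using backward_difference_bounds[OF d(1,2) M1 M2 v(2,3) h(1)] by auto
  qed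
  then show ?thesis
    using True by (simp add: power2_eq_square algebra_simps)
next
  case False
  then have "v < a \<or> b < v - h"
    using ab h by auto
  then have out: "v \<notin> {a..b}" "v - h \<notin> {a..b}"
    using h by auto
  then have "\<phi> (v - h) = 0" "\<phi> v = 0"
    by (simp_all add: supp)
  moreover have "deriv \<phi> v = 0"
    by (rule deriv_eq_0_outside_support[OF test_fun01_derivs(1)[OF tf] supp out(1)])
  moreover have "0 \<le> L"
    using Lip lipschitz_on_nonneg by force
  moreover have "0 \<le> M" "0 \<le> M1" "0 \<le> M2"
    using M[of 0 0] M1[of 0] M2[of 0] by auto
  ultimately show ?thesis
    using h by (simp add: indicator_def)
qed

lemma test_fun_quotient_bound:
  assumes tf: "test_fun01 \<phi>" and ab: "0 < a" "b < 1" and supp: "\<And>x. x \<notin> {a..b} \<Longrightarrow> \<phi> x = 0"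
    and e: "0 < e"
  shows "\<forall>\<^sub>F h in at_right 0. \<exists>T. integrable lebesgue T
    \<and> (\<forall>v. \<eta> (v - h) v * (\<phi> (v - h) - \<phi> v) \<le> h * T v)
    \<and> integral\<^sup>L lebesgue T \<le> - (LINT t:{0<..<1}|lebesgue. \<eta> t t * deriv \<phi> t) + e"
proof -
  note d = test_fun01_derivs[OF tf]
  obtain M1 where M1: "\<And>x. x \<in> {0..1} \<Longrightarrow> \<bar>deriv \<phi> x\<bar> \<le> M1"
    using continuous_on_UNIV_Icc_boundE[OF d(4)] by blast
  obtain M2 where M2: "\<And>x. x \<in> {0..1} \<Longrightarrow> \<bar>deriv (deriv \<phi>) x\<bar> \<le> M2"
    using continuous_on_UNIV_Icc_boundE[OF d(5)] by blast
  obtain M where M: "\<And>t s. t \<in> {0..1} \<Longrightarrow> s \<in> {0..1} \<Longrightarrow> \<bar>\<eta> t s\<bar> \<le> M"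
    using eta_boundedE by blast
  have "0 < a/2"
    using ab by simp
  then obtain L where Lip: "\<forall>s\<in>{0..1}. L-lipschitz_on {a/2..1} (\<lambda>t. \<eta> t s)"
    using lip by blast
  define C where "C = L * M1 + M * M2"
  note iF = set_integrable_diag_mult[OF d(4), unfolded set_integrable_def]
  have "\<forall>\<^sub>F h in at_right 0. h \<in> {0<..<min (min (a/2) (1 - b)) (e / (\<bar>C\<bar> + 1))}"
    using ab e by (intro eventually_at_right_real) auto
  then show ?thesis
  proof eventually_elim
    case (elim h)
    define T where "T v = - (indicator {0<..<1} v * (\<eta> v v * deriv \<phi> v)) + C * h * indicator {0<..<1} v" for v
    have "integrable lebesgue T"
      unfolding T_def using iF by auto
    moreover have "\<eta> (v - h) v * (\<phi> (v - h) - \<phi> v) \<le> h * T v" for v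
      unfolding T_def C_def
      by (rule test_fun_difference_le[OF tf ab supp Lip M M1 M2]) (use elim in auto)
    moreover have "integral\<^sup>L lebesgue T = - (LINT t:{0<..<1}|lebesgue. \<eta> t t * deriv \<phi> t) + C * h"
      unfolding T_def set_lebesgue_integral_def using iF by (simp add: Bochner_Integration.integral_add)
    moreover have "C * h \<le> e"
      using elim by (intro mult_le_if_less_divide) auto
    ultimately show ?case
      by (intro exI[of _ T]) auto
  qed
qed

lemma ext_integral_le_test_fun:
  assumes tf: "test_fun01 \<phi>" and pos: "\<And>x. 0 \<le> \<phi> x"
  shows "ext_integral_le {0<..<1} (\<lambda>t. dini_rate t * ereal (\<phi> t))
    (- (LINT t:{0<..<1}|lebesgue. \<eta> t t * deriv \<phi> t))"
proof -
  obtain a b where ab: "0 < a" "a \<le> b" "b < 1" and supp: "\<And>x. x \<notin> {a..b} \<Longrightarrow> \<phi> x = 0"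
    using tf unfolding test_fun01_def by blast
  obtain W where W: "\<And>x. x \<in> {0..1} \<Longrightarrow> \<bar>\<phi> x\<bar> \<le> W"
    using continuous_on_UNIV_Icc_boundE[OF test_fun01_derivs(3)[OF tf]] by blast
  show ?thesis
  proof (rule ext_integral_le_dini_rate_weight[OF ab _ pos _ supp test_fun_quotient_bound[OF tf ab(1,3) supp]])
    show "\<phi> \<in> borel_measurable borel"
      using test_fun01_derivs(3)[OF tf] by (rule borel_measurable_continuous_onI)
    show "\<phi> u \<le> W" for u
      using W[of u] W[of 0] supp[of u] ab by (cases "u \<in> {a..b}") auto
  qed
qed

text \<open>Only the boundary layers \<open>(a, a + h]\<close> and \<open>(b, b + h]\<close> contribute, where monotonicity in
  the second variable bounds \<open>\<eta>\<close> by its values at \<open>0\<close> and \<open>1\<close>.\<close>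
lemma indicator_difference_le:
  assumes h: "0 < h" "h \<le> a" "h \<le> b - a" "b + h \<le> 1"
    and lo: "\<And>t. t \<in> {0..a} \<Longrightarrow> K0 \<le> \<eta> t 0" and hi: "\<And>t. t \<in> {b - h..b} \<Longrightarrow> \<eta> t 1 \<le> K1"
  shows "\<eta> (v - h) v * (indicator {a<..b} (v - h) - indicator {a<..b} v)
    \<le> K1 * indicator {b<..b + h} v - K0 * indicator {a<..a + h} v"
proof -
  consider (top) "v \<in> {b<..b + h}" | (bot) "v \<in> {a<..a + h}" | (other) "v \<notin> {b<..b + h}" "v \<notin> {a<..a + h}"
    by blast
  then show ?thesis
  proof cases
    case top
    have "\<eta> (v - h) v \<le> \<eta> (v - h) 1"
      using top h by (intro eta_monoD) auto
    also have "\<dots> \<le> K1"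
      using top by (intro hi) auto
    finally show ?thesis
      using top h by (simp add: indicator_def)
  next
    case bot
    have "K0 \<le> \<eta> (v - h) 0"
      using bot h by (intro lo) auto
    also have "\<dots> \<le> \<eta> (v - h) v"
      using bot h by (intro eta_monoD) auto
    finally show ?thesis
      using bot h by (simp add: indicator_def)
  next
    case other
    then have "indicator {a<..b} (v - h) = (indicator {a<..b} v :: real)"
      using h by (auto simp: indicator_def)
    then show ?thesis
      using other by simp
  qed
qed

lemma interval_quotient_bound:
  assumes h: "0 < h" "h \<le> a" "h \<le> b - a" "b + h \<le> 1"
    and Lip: "\<forall>s\<in>{0..1}. L-lipschitz_on {\<epsilon>..1} (\<lambda>t. \<eta> t s)" and \<epsilon>: "\<epsilon> \<le> b - h"
    and lo: "\<And>t. t \<in> {0..a} \<Longrightarrow> K0 \<le> \<eta> t 0"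
  shows "\<exists>T. integrable lebesgue T
    \<and> (\<forall>v. \<eta> (v - h) v * (indicator {a<..b} (v - h) - indicator {a<..b} v) \<le> h * T v)
    \<and> integral\<^sup>L lebesgue T = \<eta> 1 1 + L * (1 - b + h) - K0"
proof -
  define K1 where "K1 = \<eta> 1 1 + L * (1 - b + h)"
  define T where "T v = (K1 * indicator {b<..b + h} v - K0 * indicator {a<..a + h} v) / h" for v
  have "integrable lebesgue T"
    unfolding T_def using h by (intro integrable_divide Bochner_Integration.integrable_diff
        integrable_mult_right integrable_real_indicator) auto
  moreover have "integral\<^sup>L lebesgue T = K1 - K0"
  proof -
    have "integral\<^sup>L lebesgue T = (K1 * h - K0 * h) / h"
      unfolding T_def using h by (subst integral_divide_zero, subst Bochner_Integration.integral_diff) auto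
    also have "\<dots> = K1 - K0"
      using h by (simp only: left_diff_distrib[symmetric]) simp
    finally show ?thesis .
  qed
  moreover have "\<eta> t 1 \<le> K1" if "t \<in> {b - h..b}" for t
  proof -
    have L: "0 \<le> L"
      using Lip lipschitz_on_nonneg by force
    have "\<eta> t 1 \<le> \<eta> 1 1 + L * \<bar>t - 1\<bar>"
      using eta_lipschitzD[OF Lip, of 1 t 1] that \<epsilon> h by auto
    also have "\<dots> \<le> K1"
      using that h L unfolding K1_def by (intro add_left_mono mult_left_mono) auto
    finally show ?thesis .
  qed
  then have "\<eta> (v - h) v * (indicator {a<..b} (v - h) - indicator {a<..b} v) \<le> h * T v" for v
    unfolding T_def using indicator_difference_le[OF h lo] h by auto
  ultimately show ?thesis
    by (intro exI[of _ T]) (auto simp: K1_def)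
qed

lemma ext_integral_le_interval:
  assumes ab: "0 < a" "a < b" "b < 1"
    and Lip: "\<forall>s\<in>{0..1}. L-lipschitz_on {\<epsilon>..1} (\<lambda>t. \<eta> t s)" and \<epsilon>: "\<epsilon> < b"
    and lo: "\<And>t. t \<in> {0..a} \<Longrightarrow> \<eta> 0 0 - e0 \<le> \<eta> t 0"
  shows "ext_integral_le {0<..<1} (\<lambda>u. dini_rate u * ereal (indicator {a<..b} u))
    (\<eta> 1 1 - \<eta> 0 0 + L * (1 - b) + e0)"
proof (rule ext_integral_le_dini_rate_weight[OF ab(1) less_imp_le[OF ab(2)] ab(3), where W=1])
  show "indicator {a<..b} \<in> borel_measurable borel"
    by simp
  show "(0::real) \<le> indicator {a<..b} u" "indicator {a<..b} u \<le> (1::real)" for u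
    by (auto simp: indicator_def)
  show "indicator {a<..b} u = (0::real)" if "u \<notin> {a..b}" for u
    using that by auto
  fix e :: real assume e: "0 < e"
  have "\<forall>\<^sub>F h in at_right 0. h \<in> {0<..<min (min a (b - a)) (min (min (1 - b) (b - \<epsilon>)) (e / (\<bar>L\<bar> + 1)))}"
    using ab \<epsilon> e by (intro eventually_at_right_real) auto
  then show "\<forall>\<^sub>F h in at_right 0. \<exists>T. integrable lebesgue T
    \<and> (\<forall>v. \<eta> (v - h) v * (indicator {a<..b} (v - h) - indicator {a<..b} v) \<le> h * T v)
    \<and> integral\<^sup>L lebesgue T \<le> \<eta> 1 1 - \<eta> 0 0 + L * (1 - b) + e0 + e"
  proof eventually_elim
    case (elim h)
    then obtain T where "integrable lebesgue T"
      "\<forall>v. \<eta> (v - h) v * (indicator {a<..b} (v - h) - indicator {a<..b} v) \<le> h * T v"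
      "integral\<^sup>L lebesgue T = \<eta> 1 1 + L * (1 - b + h) - (\<eta> 0 0 - e0)"
      using interval_quotient_bound[of h a b L \<epsilon> "\<eta> 0 0 - e0"] Lip lo by auto
    moreover have "L * h \<le> e"
      using elim by (intro mult_le_if_less_divide) auto
    ultimately show ?case
      by (intro exI[of _ T]) (auto simp: algebra_simps)
  qed
qed

lemma eta_near_0E:
  assumes "0 < e"
  obtains d where "0 < d" "\<And>t. t \<in> {0..d} \<Longrightarrow> \<eta> 0 0 - e \<le> \<eta> t 0"
proof -
  have "continuous_on {0..1} (\<lambda>t. \<eta> t 0)"
    using cont by auto
  then obtain d where d: "0 < d" "\<And>t. t \<in> {0..1} \<Longrightarrow> dist t 0 < d \<Longrightarrow> dist (\<eta> t 0) (\<eta> 0 0) < e"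
    using assms unfolding continuous_on_iff by (metis atLeastAtMost_iff order_refl zero_le_one)
  show ?thesis
  proof (rule that[of "min (d/2) 1"])
    fix t assume "t \<in> {0..min (d/2) 1}"
    then have "dist (\<eta> t 0) (\<eta> 0 0) < e"
      using d by (intro d(2)) (auto simp: dist_real_def)
    then show "\<eta> 0 0 - e \<le> \<eta> t 0"
      by (simp add: dist_real_def)
  qed (use d in auto)
qed

text \<open>On \<open>(a, 1 - a]\<close> the errors are the oscillation of \<open>\<eta> \<cdot> 0\<close> on \<open>[0, a]\<close> and
  \<open>L a\<close> for a Lipschitz constant \<open>L\<close> near \<open>1\<close>; both vanish as \<open>a \<rightarrow> 0\<close>.\<close>
lemma ext_integral_le_dini_rate: "ext_integral_le {0<..<1} dini_rate (\<eta> 1 1 - \<eta> 0 0)"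
proof (rule ext_integral_le_exhaust_01[OF borel_measurable_dini_rate])
  fix e :: real assume e: "0 < e"
  have "0 < (1/2::real)"
    by simp
  then obtain L where Lip: "\<forall>s\<in>{0..1}. L-lipschitz_on {1/2..1} (\<lambda>t. \<eta> t s)"
    using lip by blast
  obtain d where d: "0 < d" "\<And>t. t \<in> {0..d} \<Longrightarrow> \<eta> 0 0 - e/2 \<le> \<eta> t 0"
    using eta_near_0E[of "e/2"] e by auto
  have "\<forall>\<^sub>F a in at_right 0. a \<in> {0<..<min (min d (1/4)) ((e/2) / (\<bar>L\<bar> + 1))}"
    using d e by (intro eventually_at_right_real) auto
  then show "\<forall>\<^sub>F a in at_right 0. ext_integral_le {0<..<1}
    (\<lambda>x. dini_rate x * ereal (indicator {a<..1 - a} x)) (\<eta> 1 1 - \<eta> 0 0 + e)"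
  proof eventually_elim
    case (elim a)
    have interval: "ext_integral_le {0<..<1} (\<lambda>x. dini_rate x * ereal (indicator {a<..1 - a} x))
      (\<eta> 1 1 - \<eta> 0 0 + L * (1 - (1 - a)) + e/2)"
      using elim d by (intro ext_integral_le_interval[OF _ _ _ Lip]) auto
    have "L * a \<le> e/2"
      using elim by (intro mult_le_if_less_divide) auto
    then show ?case
      using interval by (elim ext_integral_le_mono) simp
  qed
qed

end

theorem lemma3p14:
  fixes \<eta> :: "real \<Rightarrow> real \<Rightarrow> real" and r :: "real \<Rightarrow> ereal" and \<delta> :: "real \<Rightarrow> real"
  assumes cont: "\<forall>s\<in>{0..1}. continuous_on {0..1} (\<lambda>t. \<eta> t s)"
    and lip: "\<forall>\<epsilon>>0. \<exists>L. \<forall>s\<in>{0..1}. L-lipschitz_on {\<epsilon>..1} (\<lambda>t. \<eta> t s)"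
    and mono: "\<forall>t\<in>{0..1}. mono_on {0..1} (\<lambda>s. \<eta> t s)"
    and r_def: "\<And>t. r t = Liminf (at_right 0) (\<lambda>h. ereal ((\<eta> t t - \<eta> (t - h) t) / h))
                         + Liminf (at_right 0) (\<lambda>h. ereal ((\<eta> t (t + h) - \<eta> t t) / h))"
    and \<delta>_def: "\<And>t. \<delta> t = \<eta> t t"
  shows "set_integrable lebesgue {0<..<1} \<delta>
    \<and> r \<in> borel_measurable (restrict_space lebesgue {0<..<1})
    \<and> (\<forall>\<phi>. test_fun01 \<phi> \<and> (\<forall>x. 0 \<le> \<phi> x) \<longrightarrow>
          ext_integral_le {0<..<1} (\<lambda>t. r t * ereal (\<phi> t))
            (- (LINT t:{0<..<1}|lebesgue. \<delta> t * deriv \<phi> t)))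
    \<and> ext_integral_le {0<..<1} r (\<delta> 1 - \<delta> 0)"
proof -
  interpret mono_lipschitz_kernel \<eta>
    using cont lip mono by (rule mono_lipschitz_kernel.intro)
  have "r = dini_rate"
    by (rule ext) (simp add: r_def dini_rate_def left_quot_def right_quot_def)
  moreover have "\<delta> = (\<lambda>t. \<eta> t t)"
    by (rule ext) (rule \<delta>_def)
  moreover have "set_integrable lebesgue {0<..<1} (\<lambda>t. \<eta> t t)"
    using set_integrable_diag_mult[of "\<lambda>_. 1"] by simp
  ultimately show ?thesis
    using borel_measurable_dini_rate ext_integral_le_test_fun ext_integral_le_dini_rate by auto
qed

end
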